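(* Let $n_1,\dots,n_m$ be positive integers, $N=n_1+\cdots+n_m$, and let $N_1,\dots,N_m$ be positive integers with $N_j\ge N-1$ for $j=1,\dots,m$. Define $Q(z)=\sum_{k=0}^N a_kz^k$ by $a_N=1$ and, for $k=0,1,\dots,N-1$, \[ a_{N-k-1}=\sum_{\ell=k}^{N-1}(-1)^{\ell+1}\frac{(\alpha_0-1)_{\ell-k}}{(\ell-k)!}\,\frac{(\alpha_0+\ell+1)_{N-\ell-1}}{(N-\ell-1)!}\prod_{j=1}^m\frac{(\alpha_j+\alpha_0+N_j-N+\ell+1)_{n_j}}{(\alpha_j+N_j-N+1)_{n_j}}, \] and for $j=1,\dots,m$ define $P_j(z)=\sum_{\mu=0}^{N_j}c_{j\mu}z^\mu$ with \[ c_{j\mu}=\sum_{k=0}^{\min\{N,\mu\}}a_k\frac{(\alpha_j)_{\mu-k}}{(\alpha_j+\alpha_0)_{\mu-k}}. \] Then $Q\neq0$, $\deg Q\le N$, $\deg P_j\le N_j$, and, as formal power series in $\mathbb{Q}[[z]]$, $\operatorname{ord}_{z=0}\big(Q(z)\varphi_j(z)-P_j(z)\big)\ge N_j+n_j+1$ for $j=1,\dots,m$. That is, $Q,P_1,\dots,P_m$ are type $(N;N_1,\dots,N_m)$ Padé approximation polynomials of the second kind for $\varphi_1,\dots,\varphi_m$.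
   Context: Let $m\ge1$ and let $\alpha_0,\alpha_1,\dots,\alpha_m$ be positive rational numbers with $\alpha_i-\alpha_j\notin\mathbb{Z}$ for $1\le i<j\le m$. Pochhammer symbol: $(x)_0=1$, $(x)_n=x(x+1)\cdots(x+n-1)$ for $n\ge1$. Define the formal power series $\varphi_j(z)=\sum_{n=0}^\infty\frac{(\alpha_j)_n}{(\alpha_j+\alpha_0)_n}z^n$, $j=1,\dots,m$. $\operatorname{ord}$ denotes the order of vanishing at $z=0$. Polynomials $Q\ne0,P_1,\dots,P_m$ are called type $(N;N_1,\dots,N_m)$ Padé approximation polynomials of the second kind for $\varphi_1,\dots,\varphi_m$ if $\deg Q\le N$, $\deg P_j\le N_j$ and $\operatorname{ord}(Q\varphi_j-P_j)\ge N_j+n_j+1$ for all $j$. *)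

theory Defs
  imports "HOL-Computational_Algebra.Computational_Algebra"
begin

text \<open>Indices: alpha 0 is alpha_0, alpha j (1 <= j <= m) the others; n j, NN j for j in 1..m.\<close>

definition phi :: "rat \<Rightarrow> rat \<Rightarrow> rat fps" where
  "phi a0 aj = Abs_fps (\<lambda>k. pochhammer aj k / pochhammer (aj + a0) k)"

definition totN :: "nat \<Rightarrow> (nat \<Rightarrow> nat) \<Rightarrow> nat" where
  "totN m n = (\<Sum>j=1..m. n j)"

definition padeA :: "nat \<Rightarrow> (nat \<Rightarrow> rat) \<Rightarrow> (nat \<Rightarrow> nat) \<Rightarrow> (nat \<Rightarrow> nat) \<Rightarrow> nat \<Rightarrow> rat" where
  "padeA m alpha n NN i =
     (let N = totN m n in
      if i = N then 1
      else if i < N then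
        (let k = N - i - 1 in
          \<Sum>l=k..N-1. (-1) ^ (l + 1)
             * (pochhammer (alpha 0 - 1) (l - k) / fact (l - k))
             * (pochhammer (alpha 0 + of_nat l + 1) (N - l - 1) / fact (N - l - 1))
             * (\<Prod>j=1..m. pochhammer (alpha j + alpha 0 + of_nat (NN j) - of_nat N + of_nat l + 1) (n j)
                           / pochhammer (alpha j + of_nat (NN j) - of_nat N + 1) (n j)))
      else 0)"

definition padeQ :: "nat \<Rightarrow> (nat \<Rightarrow> rat) \<Rightarrow> (nat \<Rightarrow> nat) \<Rightarrow> (nat \<Rightarrow> nat) \<Rightarrow> rat poly" where
  "padeQ m alpha n NN = (\<Sum>k\<le>totN m n. monom (padeA m alpha n NN k) k)"

definition padeC :: "nat \<Rightarrow> (nat \<Rightarrow> rat) \<Rightarrow> (nat \<Rightarrow> nat) \<Rightarrow> (nat \<Rightarrow> nat) \<Rightarrow> nat \<Rightarrow> nat \<Rightarrow> rat" where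
  "padeC m alpha n NN j \<mu> =
     (\<Sum>k=0..min (totN m n) \<mu>. padeA m alpha n NN k
        * (pochhammer (alpha j) (\<mu> - k) / pochhammer (alpha j + alpha 0) (\<mu> - k)))"

definition padeP :: "nat \<Rightarrow> (nat \<Rightarrow> rat) \<Rightarrow> (nat \<Rightarrow> nat) \<Rightarrow> (nat \<Rightarrow> nat) \<Rightarrow> nat \<Rightarrow> rat poly" where
  "padeP m alpha n NN j = (\<Sum>\<mu>\<le>NN j. monom (padeC m alpha n NN j \<mu>) \<mu>)"

end

theory Submission
  imports Defs
begin

(* The coefficient of z^mu in Q phi_j is  sum_i a_i (alpha_j)_(mu-i) / (alpha_j + alpha_0)_(mu-i),
   which for mu <= N_j is the coefficient of P_j by construction.  For mu >= N it is a nonzero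
   multiple of T(alpha_j + mu - N), where T(b) = sum_i a_i (b)_(N-i) (b + alpha_0 + N - i)_i is a
   polynomial of degree at most N in b.  The a_i are designed so that
   T(-alpha_0 - l) = (alpha_0)_N W(-alpha_0 - l) for l < N (the inner sums collapse by
   Chu-Vandermonde) and T(0) = (alpha_0)_N = (alpha_0)_N W(0), where
   W(x) = prod_j (b_j - x)_(n_j) / (b_j)_(n_j) with b_j = alpha_j + N_j - N + 1 > 0.
   Having degree at most N, T = (alpha_0)_N W, and W vanishes at alpha_j + mu - N = b_j + (mu - N_j - 1)
   whenever N_j < mu <= N_j + n_j. *)

lemma pochhammer_Vandermonde:
  fixes a b :: "'a::field_char_0"
  shows "(\<Sum>k=0..n. pochhammer a k / fact k * (pochhammer b (n - k) / fact (n - k)))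
         = pochhammer (a + b) n / fact n"
proof -
  have gchoose: "pochhammer c k / fact k = (-1) ^ k * ((- c) gchoose k)" for c :: 'a and k
    by (simp add: gbinomial_pochhammer)
  have sign: "(-1::'a) ^ k * (-1) ^ (n - k) = (-1) ^ n" if "k \<le> n" for k
    using that by (simp flip: power_add)
  have "(\<Sum>k=0..n. pochhammer a k / fact k * (pochhammer b (n - k) / fact (n - k)))
      = (\<Sum>k=0..n. (-1) ^ n * (((- a) gchoose k) * ((- b) gchoose (n - k))))"
    by (intro sum.cong refl) (auto simp: gchoose sign[symmetric] algebra_simps)
  also have "\<dots> = (-1) ^ n * ((- a - b) gchoose n)"
    by (simp add: sum_distrib_left[symmetric] gbinomial_Vandermonde)
  also have "\<dots> = pochhammer (a + b) n / fact n"
    by (simp add: gbinomial_pochhammer add.commute)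
  finally show ?thesis .
qed

lemma pochhammer_of_nat_Suc:
  "pochhammer (of_nat (Suc i) :: 'a::field_char_0) j = fact (i + j) / fact i"
proof -
  have "fact (i + j) = (pochhammer 1 (i + j) :: 'a)" by (simp add: pochhammer_fact)
  also have "\<dots> = pochhammer 1 i * pochhammer (1 + of_nat i) j" by (rule pochhammer_product')
  finally show ?thesis by (simp add: pochhammer_fact[symmetric] add.commute)
qed

lemma poly_pochhammer: "poly (pochhammer p k) x = pochhammer (poly p x) k"
  by (induction k) (simp_all add: pochhammer_Suc)

lemma degree_pochhammer_le:
  fixes p :: "'a::idom poly"
  assumes "degree p \<le> 1"
  shows "degree (pochhammer p k) \<le> k"
proof (induction k)
  case (Suc k)
  have "degree (pochhammer p (Suc k)) \<le> degree (pochhammer p k) + degree (p + of_nat k)"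
    by (simp add: pochhammer_Suc degree_mult_le)
  moreover have "degree (p + of_nat k) \<le> 1"
    using assms by (metis degree_add_le degree_of_nat zero_le)
  ultimately show ?case using Suc by simp
qed simp

definition pade_coeff :: "'a::field_char_0 \<Rightarrow> nat \<Rightarrow> (nat \<Rightarrow> 'a) \<Rightarrow> nat \<Rightarrow> 'a" where
  "pade_coeff a0 N w i =
     (if i = N then 1
      else if i < N then
        (\<Sum>l=N-i-1..N-1. (-1) ^ (l + 1)
           * (pochhammer (a0 - 1) (l - (N - i - 1)) / fact (l - (N - i - 1)))
           * (pochhammer (a0 + of_nat l + 1) (N - l - 1) / fact (N - l - 1)) * w l)
      else 0)"

definition pade_basis :: "'a::field_char_0 \<Rightarrow> nat \<Rightarrow> nat \<Rightarrow> 'a \<Rightarrow> 'a" where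
  "pade_basis a0 N i b = pochhammer b (N - i) * pochhammer (b + a0 + of_nat (N - i)) i"

definition pade_form :: "'a::field_char_0 \<Rightarrow> nat \<Rightarrow> (nat \<Rightarrow> 'a) \<Rightarrow> 'a \<Rightarrow> 'a" where
  "pade_form a0 N w b = (\<Sum>i\<le>N. pade_coeff a0 N w i * pade_basis a0 N i b)"

lemma pade_coeff_eq_0 [simp]: "N < i \<Longrightarrow> pade_coeff a0 N w i = 0"
  by (simp add: pade_coeff_def)

lemma pade_form_at_0: "pade_form a0 N w 0 = pochhammer a0 N"
proof -
  have "pade_form a0 N w 0 = (\<Sum>i\<in>{N}. pade_coeff a0 N w i * pade_basis a0 N i 0)"
    unfolding pade_form_def
    by (rule sum.mono_neutral_right) (auto simp: pade_basis_def pochhammer_0_left)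
  then show ?thesis by (simp add: pade_coeff_def pade_basis_def)
qed

lemma pade_form_expand:
  "pade_form a0 N w b = pade_basis a0 N N b +
     (\<Sum>l<N. (-1) ^ (l + 1) * (pochhammer (a0 + of_nat l + 1) (N - l - 1) / fact (N - l - 1)) * w l
        * (\<Sum>k\<le>l. pochhammer (a0 - 1) (l - k) / fact (l - k) * pade_basis a0 N (N - Suc k) b))"
    (is "_ = _ + (\<Sum>l<N. ?D l * (\<Sum>k\<le>l. ?c (l - k) * ?e k))")
proof -
  have "pade_form a0 N w b = (\<Sum>i<N. pade_coeff a0 N w i * pade_basis a0 N i b) + pade_basis a0 N N b"
    unfolding pade_form_def lessThan_Suc_atMost[symmetric] by (simp add: pade_coeff_def)
  also have "(\<Sum>i<N. pade_coeff a0 N w i * pade_basis a0 N i b)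
      = (\<Sum>k<N. pade_coeff a0 N w (N - Suc k) * ?e k)"
    by (rule sum.nat_diff_reindex[symmetric])
  also have "\<dots> = (\<Sum>k<N. \<Sum>l\<in>{l. l \<in> {..<N} \<and> k \<le> l}. ?c (l - k) * ?D l * ?e k)"
  proof (rule sum.cong[OF refl])
    fix k assume "k \<in> {..<N}"
    then have "{l. l \<in> {..<N} \<and> k \<le> l} = {k..N-1}"
      and "pade_coeff a0 N w (N - Suc k) = (\<Sum>l=k..N-1. ?c (l - k) * ?D l)"
      by (auto simp: pade_coeff_def intro!: sum.cong)
    then show "pade_coeff a0 N w (N - Suc k) * ?e k = (\<Sum>l\<in>{l. l \<in> {..<N} \<and> k \<le> l}. ?c (l - k) * ?D l * ?e k)"
      by (simp add: sum_distrib_right)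
  qed
  also have "\<dots> = (\<Sum>l<N. \<Sum>k\<in>{k. k \<in> {..<N} \<and> k \<le> l}. ?c (l - k) * ?D l * ?e k)"
    by (rule sum.swap_restrict) auto
  also have "\<dots> = (\<Sum>l<N. ?D l * (\<Sum>k\<le>l. ?c (l - k) * ?e k))"
  proof (rule sum.cong[OF refl])
    fix l assume "l \<in> {..<N}"
    then have "{k. k \<in> {..<N} \<and> k \<le> l} = {..l}" by auto
    then show "(\<Sum>k\<in>{k. k \<in> {..<N} \<and> k \<le> l}. ?c (l - k) * ?D l * ?e k) = ?D l * (\<Sum>k\<le>l. ?c (l - k) * ?e k)"
      unfolding sum_distrib_left by (simp only: mult_ac)
  qed
  finally show ?thesis by simp
qed

lemma pade_basis_at_node_eq_0:
  assumes "l < N" "k < l"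
  shows "pade_basis a0 N (N - Suc k) (- a0 - of_nat l) = 0"
proof -
  have "- a0 - of_nat l + a0 + of_nat (N - (N - Suc k)) = - of_nat (l - Suc k)"
    using assms by (simp add: of_nat_diff)
  moreover have "pochhammer (- of_nat (l - Suc k) :: 'a) (N - Suc k) = 0"
    by (rule pochhammer_of_nat_eq_0_lemma) (use assms in auto)
  ultimately show ?thesis unfolding pade_basis_def by simp
qed

lemma pade_basis_at_node:
  assumes "l \<le> k" "k < N"
  shows "pade_basis a0 N (N - Suc k) (- a0 - of_nat l) =
     (-1) ^ Suc l * pochhammer a0 (Suc l) * fact (N - Suc l) * (pochhammer (1 - a0) (k - l) / fact (k - l))"
proof -
  define i where "i = k - l"
  have k: "k = l + i" using assms i_def by simp
  have shift: "- a0 - of_nat l + a0 + of_nat (N - (N - Suc k)) = of_nat (Suc i)"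
    using assms k by (simp add: of_nat_diff)
  have second: "pochhammer (of_nat (Suc i) :: 'a) (N - Suc k) = fact (N - Suc l) / fact i"
    unfolding pochhammer_of_nat_Suc using assms k by (simp add: Suc_diff_Suc)
  have "pochhammer (- a0 - of_nat l) (N - (N - Suc k)) = pochhammer (- a0 - of_nat l) (Suc l + i)"
    using assms k by simp
  also have "\<dots> = pochhammer (- a0 - of_nat l) (Suc l) * pochhammer (1 - a0) i"
    by (subst pochhammer_product') simp
  also have "pochhammer (- a0 - of_nat l) (Suc l) = (-1) ^ Suc l * pochhammer a0 (Suc l)"
    using pochhammer_minus[of "a0 + of_nat l" "Suc l"] by simp
  finally show ?thesis
    unfolding pade_basis_def shift second i_def[symmetric] by (simp add: algebra_simps)
qed

lemma pade_inner_sum_at_node: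
  assumes "l' < N" "l < N"
  shows "(\<Sum>k\<le>l. pochhammer (a0 - 1) (l - k) / fact (l - k) * pade_basis a0 N (N - Suc k) (- a0 - of_nat l'))
    = (if l = l' then (-1) ^ Suc l' * pochhammer a0 (Suc l') * fact (N - Suc l') else 0)"
proof (cases "l' \<le> l")
  case False
  then show ?thesis using assms by (auto intro!: sum.neutral simp: pade_basis_at_node_eq_0)
next
  case True
  define K where "K = (-1) ^ Suc l' * pochhammer a0 (Suc l') * (fact (N - Suc l') :: 'a)"
  have "(\<Sum>k\<le>l. pochhammer (a0 - 1) (l - k) / fact (l - k) * pade_basis a0 N (N - Suc k) (- a0 - of_nat l'))
      = (\<Sum>k=l'..l. pochhammer (a0 - 1) (l - k) / fact (l - k) * pade_basis a0 N (N - Suc k) (- a0 - of_nat l'))"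
    by (rule sum.mono_neutral_right) (use assms in \<open>auto simp: pade_basis_at_node_eq_0\<close>)
  also have "\<dots> = K * (\<Sum>i=0..l-l'. pochhammer (a0 - 1) (l - l' - i) / fact (l - l' - i)
                                       * (pochhammer (1 - a0) i / fact i))"
    by (subst sum.atLeastAtMost_shift_0[OF True])
       (use assms in \<open>auto simp: sum_distrib_left pade_basis_at_node K_def mult_ac intro!: sum.cong\<close>)
  also have "\<dots> = K * (pochhammer 0 (l - l') / fact (l - l'))"
    using pochhammer_Vandermonde[where a="1 - a0" and b="a0 - 1" and n="l - l'"] by (simp only: mult.commute) simp
  finally show ?thesis using True K_def by (auto simp: pochhammer_0_left)
qed

lemma pade_form_at_node:
  assumes "l < N"
  shows "pade_form a0 N w (- a0 - of_nat l) = pochhammer a0 N * w l"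
proof -
  have top_vanishes: "pade_basis a0 N N (- a0 - of_nat l) = 0"
    unfolding pade_basis_def using assms by (simp add: pochhammer_of_nat_eq_0_lemma)
  have "pade_form a0 N w (- a0 - of_nat l)
      = (\<Sum>k<N. (-1) ^ (k + 1) * (pochhammer (a0 + of_nat k + 1) (N - k - 1) / fact (N - k - 1)) * w k
          * (if k = l then (-1) ^ Suc l * pochhammer a0 (Suc l) * fact (N - Suc l) else 0))"
    unfolding pade_form_expand top_vanishes add_0_left
    by (intro sum.cong refl arg_cong2[where f=times] pade_inner_sum_at_node assms) simp
  also have "\<dots> = (-1) ^ (l + 1) * (pochhammer (a0 + of_nat l + 1) (N - l - 1) / fact (N - l - 1)) * w l
        * ((-1) ^ Suc l * pochhammer a0 (Suc l) * fact (N - Suc l))"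
    using assms by (simp add: if_distrib sum.delta cong: if_cong)
  also have "\<dots> = pochhammer a0 (Suc l) * pochhammer (a0 + of_nat (Suc l)) (N - Suc l) * w l"
    by (simp add: algebra_simps)
  also have "pochhammer a0 (Suc l) * pochhammer (a0 + of_nat (Suc l)) (N - Suc l) = pochhammer a0 N"
    using pochhammer_product'[of a0 "Suc l" "N - Suc l"] assms by simp
  finally show ?thesis .
qed

definition pade_form_poly :: "'a::field_char_0 \<Rightarrow> nat \<Rightarrow> (nat \<Rightarrow> 'a) \<Rightarrow> 'a poly" where
  "pade_form_poly a0 N w = (\<Sum>i\<le>N. smult (pade_coeff a0 N w i)
      (pochhammer [:0, 1:] (N - i) * pochhammer [:a0 + of_nat (N - i), 1:] i))"

lemma poly_pade_form_poly: "poly (pade_form_poly a0 N w) b = pade_form a0 N w b"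
  unfolding pade_form_poly_def pade_form_def pade_basis_def
  by (simp add: poly_sum poly_pochhammer algebra_simps)

lemma degree_pade_form_poly: "degree (pade_form_poly a0 N w) \<le> N"
  unfolding pade_form_poly_def
proof (rule degree_sum_le)
  fix i assume "i \<in> {..N}"
  have "degree (pochhammer [:0, 1:] (N - i) * pochhammer [:a0 + of_nat (N - i), 1:] i) \<le> (N - i) + i"
    by (rule order.trans[OF degree_mult_le add_mono]) (auto intro!: degree_pochhammer_le)
  then show "degree (smult (pade_coeff a0 N w i)
      (pochhammer [:0, 1:] (N - i) * pochhammer [:a0 + of_nat (N - i), 1:] i)) \<le> N"
    using \<open>i \<in> {..N}\<close> by (metis degree_smult_le le_add_diff_inverse2 atMost_iff order.trans)
qed simp

lemma pade_form_interpolates: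
  fixes W :: "'a::linordered_field poly"
  assumes "a0 > 0" "degree W \<le> N" "poly W 0 = 1"
  shows "pade_form a0 N (\<lambda>l. poly W (- a0 - of_nat l)) b = pochhammer a0 N * poly W b"
proof -
  define w where "w = (\<lambda>l. poly W (- a0 - of_nat l))"
  define T where "T = pade_form_poly a0 N w"
  define nodes where "nodes = insert 0 ((\<lambda>l. - a0 - of_nat l) ` {..<N})"
  have "- a0 - of_nat l < 0" for l
    using \<open>a0 > 0\<close> add_pos_nonneg[of a0 "of_nat l"] by simp
  then have "0 \<notin> (\<lambda>l. - a0 - of_nat l) ` {..<N}"
    by (metis imageE less_irrefl)
  moreover have "inj_on (\<lambda>l. - a0 - of_nat l) {..<N}" by (auto simp: inj_on_def)
  ultimately have card_nodes: "card nodes = Suc N"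
    unfolding nodes_def by (simp add: card_image)
  have "T = smult (pochhammer a0 N) W"
  proof (rule poly_eqI_degree[of nodes])
    show "poly T x = poly (smult (pochhammer a0 N) W) x" if "x \<in> nodes" for x
      using that \<open>poly W 0 = 1\<close>
      by (auto simp: nodes_def T_def poly_pade_form_poly pade_form_at_0 pade_form_at_node w_def)
    show "degree T < card nodes"
      unfolding T_def card_nodes by (rule le_imp_less_Suc[OF degree_pade_form_poly])
    show "degree (smult (pochhammer a0 N) W) < card nodes"
      using \<open>degree W \<le> N\<close> card_nodes by (metis degree_smult_le le_imp_less_Suc order.trans)
  qed
  then have "poly T b = pochhammer a0 N * poly W b" by simp
  then show ?thesis unfolding w_def[symmetric] T_def poly_pade_form_poly .
qed

lemma pade_convolution:
  fixes c a0 :: "'a::linordered_field"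
  assumes "c > 0" "a0 > 0" "N \<le> \<mu>"
  shows "(\<Sum>i=0..\<mu>. pade_coeff a0 N w i * (pochhammer c (\<mu> - i) / pochhammer (c + a0) (\<mu> - i))) =
    pochhammer c (\<mu> - N) / (pochhammer (c + a0) (\<mu> - N) * pochhammer (c + of_nat (\<mu> - N) + a0) N)
      * pade_form a0 N w (c + of_nat (\<mu> - N))"
proof -
  define b where "b = c + of_nat (\<mu> - N)"
  define F where "F = pochhammer c (\<mu> - N) / (pochhammer (c + a0) (\<mu> - N) * pochhammer (b + a0) N)"
  have "b + a0 > 0" using assms by (simp add: b_def add_pos_nonneg)
  have "(\<Sum>i=0..\<mu>. pade_coeff a0 N w i * (pochhammer c (\<mu> - i) / pochhammer (c + a0) (\<mu> - i))) =
        (\<Sum>i\<le>N. pade_coeff a0 N w i * (pochhammer c (\<mu> - i) / pochhammer (c + a0) (\<mu> - i)))"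
    by (rule sum.mono_neutral_right) (use assms in auto)
  also have "\<dots> = (\<Sum>i\<le>N. F * (pade_coeff a0 N w i * pade_basis a0 N i b))"
  proof (rule sum.cong[OF refl])
    fix i assume "i \<in> {..N}"
    then have i: "i \<le> N" by simp
    have num: "pochhammer c (\<mu> - i) = pochhammer c (\<mu> - N) * pochhammer b (N - i)"
      using pochhammer_product'[of c "\<mu> - N" "N - i"] i assms by (simp add: b_def)
    have den: "pochhammer (c + a0) (\<mu> - i) = pochhammer (c + a0) (\<mu> - N) * pochhammer (b + a0) (N - i)"
      using pochhammer_product'[of "c + a0" "\<mu> - N" "N - i"] i assms by (simp add: b_def ac_simps)
    have full: "pochhammer (b + a0) N = pochhammer (b + a0) (N - i) * pochhammer (b + a0 + of_nat (N - i)) i"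
      using pochhammer_product'[of "b + a0" "N - i" i] i by simp
    have "pochhammer (c + a0) (\<mu> - N) > 0" "pochhammer (b + a0) (N - i) > 0"
      "pochhammer (b + a0 + of_nat (N - i)) i > 0"
      using assms \<open>b + a0 > 0\<close> by (auto intro!: pochhammer_pos add_pos_nonneg)
    then show "pade_coeff a0 N w i * (pochhammer c (\<mu> - i) / pochhammer (c + a0) (\<mu> - i)) =
      F * (pade_coeff a0 N w i * pade_basis a0 N i b)"
      unfolding num den F_def full pade_basis_def by (simp add: field_simps)
  qed
  also have "\<dots> = F * pade_form a0 N w b"
    unfolding pade_form_def by (simp add: sum_distrib_left)
  finally show ?thesis by (simp add: F_def b_def)
qed

definition pade_weight_poly :: "nat \<Rightarrow> (nat \<Rightarrow> 'a::field_char_0) \<Rightarrow> (nat \<Rightarrow> nat) \<Rightarrow> 'a poly" where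
  "pade_weight_poly m b n =
     (\<Prod>j=1..m. smult (1 / pochhammer (b j) (n j)) (pochhammer [:b j, -1:] (n j)))"

lemma poly_pade_weight_poly:
  "poly (pade_weight_poly m b n) x = (\<Prod>j=1..m. pochhammer (b j - x) (n j) / pochhammer (b j) (n j))"
  unfolding pade_weight_poly_def by (simp add: poly_prod poly_pochhammer)

lemma degree_pade_weight_poly: "degree (pade_weight_poly m b n) \<le> (\<Sum>j=1..m. n j)"
proof -
  have "degree (pade_weight_poly m b n)
      \<le> (\<Sum>j=1..m. degree (smult (1 / pochhammer (b j) (n j)) (pochhammer [:b j, -1:] (n j))))"
    unfolding pade_weight_poly_def by (rule order.trans[OF degree_prod_sum_le]) (simp_all add: o_def)
  also have "\<dots> \<le> (\<Sum>j=1..m. n j)"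
  proof (rule sum_mono)
    fix j
    have "degree (pochhammer [:b j, -1:] (n j)) \<le> n j"
      by (rule degree_pochhammer_le) simp
    then show "degree (smult (1 / pochhammer (b j) (n j)) (pochhammer [:b j, -1:] (n j))) \<le> n j"
      using degree_smult_le order.trans by blast
  qed
  finally show ?thesis .
qed

lemma pade_weight_poly_at_0:
  assumes "\<And>j. j \<in> {1..m} \<Longrightarrow> pochhammer (b j) (n j) \<noteq> 0"
  shows "poly (pade_weight_poly m b n) 0 = 1"
  unfolding poly_pade_weight_poly using assms by (intro prod.neutral) simp

lemma pade_weight_poly_root:
  assumes "j \<in> {1..m}" "k < n j"
  shows "poly (pade_weight_poly m b n) (b j + of_nat k) = 0"
  unfolding poly_pade_weight_poly using assms
  by (intro prod_zero bexI[of _ j]) (simp_all add: pochhammer_of_nat_eq_0_lemma)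

definition padeW :: "nat \<Rightarrow> (nat \<Rightarrow> rat) \<Rightarrow> (nat \<Rightarrow> nat) \<Rightarrow> (nat \<Rightarrow> nat) \<Rightarrow> rat poly" where
  "padeW m alpha n NN =
     pade_weight_poly m (\<lambda>j. alpha j + of_nat (NN j) - of_nat (totN m n) + 1) n"

lemma padeA_eq_pade_coeff:
  "padeA m alpha n NN =
     pade_coeff (alpha 0) (totN m n) (\<lambda>l. poly (padeW m alpha n NN) (- alpha 0 - of_nat l))"
  unfolding padeA_def pade_coeff_def padeW_def poly_pade_weight_poly Let_def
  by (intro ext if_cong refl sum.cong arg_cong2[where f=times] prod.cong) (simp add: algebra_simps)

lemma coeff_padeQ: "coeff (padeQ m alpha n NN) i = padeA m alpha n NN i"
proof -
  have "coeff (padeQ m alpha n NN) i = (\<Sum>k\<le>totN m n. if k = i then padeA m alpha n NN k else 0)"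
    unfolding padeQ_def by (simp add: coeff_sum coeff_monom)
  also have "\<dots> = padeA m alpha n NN i"
    by (auto simp: sum.delta padeA_def Let_def)
  finally show ?thesis .
qed

lemma padeQ_nonzero: "padeQ m alpha n NN \<noteq> 0"
  using coeff_padeQ[of m alpha n NN "totN m n"] by (auto simp: padeA_def)

lemma degree_padeQ_le: "degree (padeQ m alpha n NN) \<le> totN m n"
  unfolding padeQ_def by (rule degree_sum_le) (auto intro: order.trans[OF degree_monom_le])

lemma degree_padeP_le: "degree (padeP m alpha n NN j) \<le> NN j"
  unfolding padeP_def by (rule degree_sum_le) (auto intro: order.trans[OF degree_monom_le])

lemma coeff_padeP:
  "coeff (padeP m alpha n NN j) \<mu> =
     (if \<mu> \<le> NN j then (\<Sum>i=0..\<mu>. padeA m alpha n NN i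
         * (pochhammer (alpha j) (\<mu> - i) / pochhammer (alpha j + alpha 0) (\<mu> - i)))
      else 0)"
proof -
  have "coeff (padeP m alpha n NN j) \<mu> = (\<Sum>k\<le>NN j. if k = \<mu> then padeC m alpha n NN j k else 0)"
    unfolding padeP_def by (simp add: coeff_sum coeff_monom)
  also have "\<dots> = (if \<mu> \<le> NN j then padeC m alpha n NN j \<mu> else 0)"
    by (simp add: sum.delta)
  also have "padeC m alpha n NN j \<mu> = (\<Sum>i=0..\<mu>. padeA m alpha n NN i
         * (pochhammer (alpha j) (\<mu> - i) / pochhammer (alpha j + alpha 0) (\<mu> - i)))"
    unfolding padeC_def by (rule sum.mono_neutral_left) (auto simp: padeA_def Let_def)
  finally show ?thesis .
qed

lemma fps_nth_padeQ_phi: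
  "fps_nth (fps_of_poly (padeQ m alpha n NN) * phi (alpha 0) (alpha j)) \<mu> =
     (\<Sum>i=0..\<mu>. padeA m alpha n NN i
         * (pochhammer (alpha j) (\<mu> - i) / pochhammer (alpha j + alpha 0) (\<mu> - i)))"
  by (simp add: fps_mult_nth coeff_padeQ phi_def add.commute)

lemma padeW_at_0:
  assumes "\<And>i. i \<in> {1..m} \<Longrightarrow> alpha i > 0 \<and> totN m n \<le> NN i + 1"
  shows "poly (padeW m alpha n NN) 0 = 1"
  unfolding padeW_def
proof (rule pade_weight_poly_at_0)
  fix i assume "i \<in> {1..m}"
  then have "alpha i > 0" and "totN m n \<le> NN i + 1" using assms by auto
  then have "(of_nat (totN m n) :: rat) \<le> of_nat (NN i) + 1" and "alpha i > 0"
    by (simp_all only: of_nat_le_iff flip: of_nat_Suc Suc_eq_plus1)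
  then have "alpha i + of_nat (NN i) - of_nat (totN m n) + 1 > 0" by linarith
  then show "pochhammer (alpha i + of_nat (NN i) - of_nat (totN m n) + 1) (n i) \<noteq> 0"
    using pochhammer_pos by (metis less_irrefl)
qed

lemma padeW_root:
  assumes "j \<in> {1..m}" "totN m n \<le> NN j + 1" "NN j < \<mu>" "\<mu> \<le> NN j + n j"
  shows "poly (padeW m alpha n NN) (alpha j + of_nat (\<mu> - totN m n)) = 0"
proof -
  have "alpha j + of_nat (\<mu> - totN m n)
      = (alpha j + of_nat (NN j) - of_nat (totN m n) + 1) + of_nat (\<mu> - NN j - 1)"
    using assms by (simp add: of_nat_diff)
  also have "poly (padeW m alpha n NN) \<dots> = 0"
    unfolding padeW_def
    by (rule pade_weight_poly_root[where b = "\<lambda>j. alpha j + of_nat (NN j) - of_nat (totN m n) + 1"])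
      (use assms in auto)
  finally show ?thesis .
qed

lemma degree_padeW_le: "degree (padeW m alpha n NN) \<le> totN m n"
  unfolding padeW_def totN_def by (rule degree_pade_weight_poly)

lemma padeQ_phi_coeff_eq_0:
  assumes "alpha 0 > 0"
    and pos: "\<And>i. i \<in> {1..m} \<Longrightarrow> alpha i > 0 \<and> totN m n \<le> NN i + 1"
    and "j \<in> {1..m}" "NN j < \<mu>" "\<mu> \<le> NN j + n j"
  shows "(\<Sum>i=0..\<mu>. padeA m alpha n NN i
           * (pochhammer (alpha j) (\<mu> - i) / pochhammer (alpha j + alpha 0) (\<mu> - i))) = 0"
proof -
  define N where "N = totN m n"
  define W where "W = padeW m alpha n NN"
  have "alpha j > 0" "N \<le> NN j + 1" using pos[OF \<open>j \<in> {1..m}\<close>] by (auto simp: N_def)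
  have "pade_form (alpha 0) N (\<lambda>l. poly W (- alpha 0 - of_nat l)) (alpha j + of_nat (\<mu> - N))
      = pochhammer (alpha 0) N * poly W (alpha j + of_nat (\<mu> - N))"
    using \<open>alpha 0 > 0\<close> degree_padeW_le padeW_at_0[OF pos]
    by (simp add: pade_form_interpolates W_def N_def)
  also have "poly W (alpha j + of_nat (\<mu> - N)) = 0"
    unfolding W_def N_def
    by (rule padeW_root) (use assms \<open>N \<le> NN j + 1\<close> in \<open>simp_all add: N_def\<close>)
  finally show ?thesis
    unfolding padeA_eq_pade_coeff W_def[symmetric] N_def[symmetric]
    using pade_convolution[of "alpha j" "alpha 0" N \<mu>] \<open>alpha j > 0\<close> assms \<open>N \<le> NN j + 1\<close>
    by (simp add: add.commute)
qed

theorem theorem1: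
  fixes m :: nat and alpha :: "nat \<Rightarrow> rat" and n NN :: "nat \<Rightarrow> nat"
  assumes "m \<ge> 1"
    and "\<And>i. i \<le> m \<Longrightarrow> alpha i > 0"
    and "\<And>i j. 1 \<le> i \<Longrightarrow> i < j \<Longrightarrow> j \<le> m \<Longrightarrow> alpha i - alpha j \<notin> \<int>"
    and "\<And>j. 1 \<le> j \<Longrightarrow> j \<le> m \<Longrightarrow> n j > 0"
    and "\<And>j. 1 \<le> j \<Longrightarrow> j \<le> m \<Longrightarrow> NN j > 0"
    and "\<And>j. 1 \<le> j \<Longrightarrow> j \<le> m \<Longrightarrow> NN j + 1 \<ge> (\<Sum>i=1..m. n i)"
  shows "padeQ m alpha n NN \<noteq> 0
    \<and> degree (padeQ m alpha n NN) \<le> (\<Sum>i=1..m. n i)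
    \<and> (\<forall>j. 1 \<le> j \<and> j \<le> m \<longrightarrow>
          degree (padeP m alpha n NN j) \<le> NN j
        \<and> (\<forall>k < NN j + n j + 1.
             fps_nth (fps_of_poly (padeQ m alpha n NN) * phi (alpha 0) (alpha j)
                      - fps_of_poly (padeP m alpha n NN j)) k = 0))"
proof -
  have "alpha 0 > 0" using assms(2) by simp
  have pos: "alpha i > 0 \<and> totN m n \<le> NN i + 1" if "i \<in> {1..m}" for i
    using that assms(2,6) by (auto simp: totN_def)
  have "fps_nth (fps_of_poly (padeQ m alpha n NN) * phi (alpha 0) (alpha j)
          - fps_of_poly (padeP m alpha n NN j)) k = 0"
    if "j \<in> {1..m}" "k < NN j + n j + 1" for j k
  proof (cases "k \<le> NN j")
    case True
    then show ?thesis by (simp add: fps_nth_padeQ_phi coeff_padeP)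
  next
    case False
    then show ?thesis
      using padeQ_phi_coeff_eq_0[where alpha = alpha and \<mu> = k, OF \<open>alpha 0 > 0\<close> pos \<open>j \<in> {1..m}\<close>] that
      by (simp add: fps_nth_padeQ_phi coeff_padeP)
  qed
  then show ?thesis
    using padeQ_nonzero degree_padeQ_le degree_padeP_le by (auto simp: totN_def)
qed

end
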